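(* Consider an $N$-player distributionally robust game (as defined in the context) with player risk levels $\varepsilon_i\in(0,1]$ and ambiguity set $$\mathcal{F} = \{ Q : Q[\mathbf{W}\cdot\mathrm{vec}(\tilde{\mathbf{P}})\le\mathbf{h}] = 1,\ \mathbb{E}_Q[\mathrm{vec}\,\tilde{\mathbf{P}}] = \mathbf{m},\ \mathbb{E}_Q[\|\mathrm{vec}(\tilde{\mathbf{P}})-\mathbf{m}\|_1]\le s\},$$ where $\{\mathbf{P}:\mathbf{W}\mathrm{vec}(\mathbf{P})\le\mathbf{h}\}$ is a bounded polyhedral set containing $\mathbf{m}$, and with $s=0$. Then its set of Distributionally Robust Optimization Equilibria equals the set of Nash equilibria of the complete information game with fixed payoff matrix $\mathbf{M}$, where $\mathrm{vec}(\mathbf{M})=\mathbf{m}$.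
   Context: A finite $N$-player game: player $i$ has actions $\{1,\dots,a_i\}$ and mixed strategy set $S_{a_i} = \{\mathbf{x}^i\in\mathbb{R}^{a_i} : \mathbf{x}^i\ge 0,\ \sum_{j=1}^{a_i} x^i_j = 1\}$; $S=\prod_{i} S_{a_i}$. A payoff matrix $\mathbf{P}\in\mathbb{R}^{N\times\prod_{k=1}^N a_k}$ has entries $\mathbf{P}^i_{(j_1,\dots,j_N)}$, the payoff to player $i$ when each player $k$ plays action $j_k$. The expected payoff is $\pi_i(\mathbf{P};\mathbf{x}^1,\dots,\mathbf{x}^N) = \sum_{j_1=1}^{a_1}\cdots\sum_{j_N=1}^{a_N}\mathbf{P}^i_{(j_1,\dots,j_N)}\prod_{k=1}^N x^k_{j_k}$. Write $\mathbf{x}^{-i}$ for the strategies of all players except $i$, and $(\mathbf{x}^{-i},\mathbf{u}^i)$ for the profile with $\mathbf{x}^i$ replaced by $\mathbf{u}^i$. $\mathrm{vec}(\mathbf{A})$ is the column vector obtained by stacking the rows of $\mathbf{A}$. $\tilde{\mathbf{P}}$ denotes a random payoff matrix. For a loss random variable $L$ and $\varepsilon\in(0,1]$, $Q\text{-CVaR}_\varepsilon(L) = \min_{\zeta\in\mathbb{R}} \zeta + \frac{1}{\varepsilon}\mathbb{E}_Q[L-\zeta]^+$, with $[x]^+=\max\{x,0\}$. Distributionally robust game: commonly known ambiguity set $\mathcal{F}$ of distributions $Q$ of $\tilde{\mathbf{P}}$ and risk levels $\varepsilon_i\in(0,1]$. A profile $(\mathbf{x}^1,\dots,\mathbf{x}^N)\in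 S$ is a Distributionally Robust Optimization Equilibrium iff for every $i$, $\mathbf{x}^i\in\arg\min_{\mathbf{u}^i\in S_{a_i}}\sup_{Q\in\mathcal{F}} Q\text{-CVaR}_{\varepsilon_i}[-\pi_i(\tilde{\mathbf{P}};\mathbf{x}^{-i},\mathbf{u}^i)]$. A Nash equilibrium of the game with fixed payoff matrix $\check{\mathbf{P}}$ is a profile in $S$ with $\mathbf{x}^i\in\arg\max_{\mathbf{u}^i\in S_{a_i}}\pi_i(\check{\mathbf{P}};\mathbf{x}^{-i},\mathbf{u}^i)$ for every $i$. *)

theory Defs
  imports "HOL-Probability.Probability"
begin

text \<open>A payoff matrix is a function on the index set of pairs (player, profile);
  this index set plays the role of the coordinates of vec(P).\<close>

definition profiles :: "nat \<Rightarrow> (nat \<Rightarrow> nat) \<Rightarrow> (nat \<Rightarrow> nat) set" where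
  "profiles N a = PiE {..<N} (\<lambda>k. {1..a k})"

definition idx :: "nat \<Rightarrow> (nat \<Rightarrow> nat) \<Rightarrow> (nat \<times> (nat \<Rightarrow> nat)) set" where
  "idx N a = {..<N} \<times> profiles N a"

type_synonym pmat = "nat \<times> (nat \<Rightarrow> nat) \<Rightarrow> real"

definition mixed_strats :: "nat \<Rightarrow> (nat \<Rightarrow> real) set" where
  "mixed_strats n = {u. (\<forall>j\<in>{1..n}. 0 \<le> u j) \<and> (\<Sum>j\<in>{1..n}. u j) = 1}"

definition strategies :: "nat \<Rightarrow> (nat \<Rightarrow> nat) \<Rightarrow> (nat \<Rightarrow> nat \<Rightarrow> real) set" where
  "strategies N a = PiE {..<N} (\<lambda>k. mixed_strats (a k))"

definition payoff :: "nat \<Rightarrow> (nat \<Rightarrow> nat) \<Rightarrow> pmat \<Rightarrow> nat \<Rightarrow> (nat \<Rightarrow> nat \<Rightarrow> real) \<Rightarrow> real" where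
  "payoff N a P i x = (\<Sum>j\<in>profiles N a. P (i, j) * (\<Prod>k<N. x k (j k)))"

definition pmat_space :: "nat \<Rightarrow> (nat \<Rightarrow> nat) \<Rightarrow> pmat measure" where
  "pmat_space N a = PiM (idx N a) (\<lambda>_. borel)"

definition in_poly :: "nat \<Rightarrow> (nat \<Rightarrow> nat) \<Rightarrow> nat \<Rightarrow> (nat \<Rightarrow> nat \<times> (nat \<Rightarrow> nat) \<Rightarrow> real)
    \<Rightarrow> (nat \<Rightarrow> real) \<Rightarrow> pmat \<Rightarrow> bool" where
  "in_poly N a K W h p = (\<forall>r<K. (\<Sum>d\<in>idx N a. W r d * p d) \<le> h r)"

definition ambiguity :: "nat \<Rightarrow> (nat \<Rightarrow> nat) \<Rightarrow> nat \<Rightarrow> (nat \<Rightarrow> nat \<times> (nat \<Rightarrow> nat) \<Rightarrow> real)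
    \<Rightarrow> (nat \<Rightarrow> real) \<Rightarrow> pmat \<Rightarrow> real \<Rightarrow> pmat measure set" where
  "ambiguity N a K W h m s = {Q. prob_space Q \<and> sets Q = sets (pmat_space N a)
     \<and> measure Q {p \<in> space Q. in_poly N a K W h p} = 1
     \<and> (\<forall>d\<in>idx N a. integrable Q (\<lambda>p. p d) \<and> (\<integral>p. p d \<partial>Q) = m d)
     \<and> integrable Q (\<lambda>p. \<Sum>d\<in>idx N a. \<bar>p d - m d\<bar>)
     \<and> (\<integral>p. (\<Sum>d\<in>idx N a. \<bar>p d - m d\<bar>) \<partial>Q) \<le> s}"

definition cvar :: "pmat measure \<Rightarrow> real \<Rightarrow> (pmat \<Rightarrow> real) \<Rightarrow> real" where
  "cvar Q \<epsilon> L = (INF \<zeta>::real. \<zeta> + (1 / \<epsilon>) * (\<integral>p. max (L p - \<zeta>) 0 \<partial>Q))"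

definition worst_cvar where
  "worst_cvar N a F \<epsilon> i x = (SUP Q\<in>F. cvar Q \<epsilon> (\<lambda>p. - payoff N a p i x))"

definition DROE :: "nat \<Rightarrow> (nat \<Rightarrow> nat) \<Rightarrow> pmat measure set \<Rightarrow> (nat \<Rightarrow> real)
    \<Rightarrow> (nat \<Rightarrow> nat \<Rightarrow> real) set" where
  "DROE N a F eps = {x \<in> strategies N a. \<forall>i<N. \<forall>u\<in>mixed_strats (a i).
      worst_cvar N a F (eps i) i x \<le> worst_cvar N a F (eps i) i (x(i := u))}"

definition nash :: "nat \<Rightarrow> (nat \<Rightarrow> nat) \<Rightarrow> pmat \<Rightarrow> (nat \<Rightarrow> nat \<Rightarrow> real) set" where
  "nash N a P = {x \<in> strategies N a. \<forall>i<N. \<forall>u\<in>mixed_strats (a i).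
      payoff N a P i (x(i := u)) \<le> payoff N a P i x}"

end

theory Submission
  imports Defs
begin

text \<open>With \<open>s = 0\<close> the mean-absolute-deviation constraint forces every distribution in the
  ambiguity set to be the point mass at the mean \<open>m\<close> (and that point mass does belong to it,
  since \<open>m\<close> lies in the support polyhedron). Hence every loss is almost surely the constant
  \<open>- \<pi>\<^sub>i(M; x)\<close>; for \<open>\<epsilon> \<le> 1\<close> its CVaR is that constant (the minimising \<open>\<zeta>\<close> is the constant itself), so the
  worst-case CVaR of player \<open>i\<close> is exactly \<open>- \<pi>\<^sub>i(M; x)\<close> and the two equilibrium
  notions coincide.\<close>

lemma INF_cvar_objective_const:
  fixes c e :: real
  assumes "0 < e" "e \<le> 1"
  shows "(INF z. z + (1 / e) * max (c - z) 0) = c"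
proof (rule cInf_eq_minimum)
  show "c \<in> range (\<lambda>z. z + (1 / e) * max (c - z) 0)"
    by (rule range_eqI[of _ _ c]) simp
next
  fix y assume "y \<in> range (\<lambda>z. z + (1 / e) * max (c - z) 0)"
  then obtain z where y: "y = z + (1 / e) * max (c - z) 0" by auto
  show "c \<le> y"
  proof (cases "c \<le> z")
    case True
    then show ?thesis using y assms by simp
  next
    case False
    have "c - z \<le> (1 / e) * (c - z)"
      using False assms mult_right_mono[of 1 "1 / e" "c - z"] by simp
    then show ?thesis using y False by simp
  qed
qed

lemma cvar_AE_const:
  assumes "prob_space Q" and "0 < e" "e \<le> 1"
    and L: "L \<in> borel_measurable Q" and ae: "AE p in Q. L p = c"
  shows "cvar Q e L = c"
proof -
  interpret prob_space Q by fact
  have "(\<integral>p. max (L p - z) 0 \<partial>Q) = max (c - z) 0" for z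
  proof -
    have "(\<integral>p. max (L p - z) 0 \<partial>Q) = (\<integral>p. max (c - z) 0 \<partial>Q)"
      by (rule integral_cong_AE) (use L ae in \<open>auto elim!: AE_mp\<close>)
    then show ?thesis by (simp add: prob_space)
  qed
  then show ?thesis
    unfolding cvar_def using INF_cvar_objective_const[OF assms(2,3)] by simp
qed

lemma finite_idx: "finite (idx N a)"
  unfolding idx_def profiles_def by (auto intro!: finite_PiE)

lemma measurable_coordinate_pmat_space [measurable]:
  "d \<in> idx N a \<Longrightarrow> (\<lambda>p. p d) \<in> borel_measurable (pmat_space N a)"
  unfolding pmat_space_def by (rule measurable_component_singleton)

lemma measurable_payoff_pmat_space:
  assumes "i < N"
  shows "(\<lambda>p. payoff N a p i x) \<in> borel_measurable (pmat_space N a)"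
  unfolding payoff_def using assms
  by (intro borel_measurable_sum borel_measurable_times borel_measurable_const
      measurable_coordinate_pmat_space) (auto simp: idx_def)

lemma payoff_cong:
  assumes "\<forall>d\<in>idx N a. p d = q d" and "i < N"
  shows "payoff N a p i x = payoff N a q i x"
  unfolding payoff_def using assms by (intro sum.cong) (auto simp: idx_def)

lemma ambiguity_zero_AE_eq_mean:
  assumes "Q \<in> ambiguity N a K W h m 0"
  shows "AE p in Q. \<forall>d\<in>idx N a. p d = m d"
proof -
  let ?dev = "\<lambda>p. \<Sum>d\<in>idx N a. \<bar>p d - m d\<bar>"
  from assms have "prob_space Q" and int: "integrable Q ?dev" and le: "integral\<^sup>L Q ?dev \<le> 0"
    unfolding ambiguity_def by auto
  have nn: "AE p in Q. 0 \<le> ?dev p"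
    by (auto intro: sum_nonneg)
  with le have "integral\<^sup>L Q ?dev = 0"
    using integral_nonneg_AE[OF nn] by simp
  then have "AE p in Q. ?dev p = 0"
    using integral_nonneg_eq_0_iff_AE[OF int nn] by simp
  then show ?thesis
    by (rule AE_mp) (auto simp: sum_nonneg_eq_0_iff[OF finite_idx])
qed

lemma integrable_return:
  assumes x: "x \<in> space M" and f [measurable]: "(f :: _ \<Rightarrow> real) \<in> borel_measurable M"
  shows "integrable (return M x) f"
proof -
  interpret prob_space "return M x"
    using x by (rule prob_space_return)
  have "AE y in return M x. f y = f x"
    using x by (simp add: AE_return)
  then show ?thesis
    by (subst integrable_cong_AE[where g = "\<lambda>_. f x"]) auto
qed

lemma return_mean_in_ambiguity:
  assumes "in_poly N a K W h m"
  shows "return (pmat_space N a) (restrict m (idx N a)) \<in> ambiguity N a K W h m 0"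
proof -
  let ?M = "pmat_space N a" and ?m = "restrict m (idx N a)"
  let ?dev = "\<lambda>p. \<Sum>d\<in>idx N a. \<bar>p d - m d\<bar>"
  have m: "?m \<in> space ?M"
    unfolding pmat_space_def space_PiM by auto
  have dev [measurable]: "?dev \<in> borel_measurable ?M"
    by measurable
  have poly: "{p \<in> space ?M. in_poly N a K W h p} \<in> sets ?M"
    unfolding in_poly_def by measurable
  have "in_poly N a K W h ?m"
    using assms unfolding in_poly_def by simp
  moreover have "integral\<^sup>L (return ?M ?m) ?dev = 0"
    using integral_return[OF m dev] by simp
  ultimately show ?thesis
    unfolding ambiguity_def
    using prob_space_return[OF m] measure_return[OF poly] m integrable_return[OF m dev]
      integrable_return[OF m measurable_coordinate_pmat_space]
      integral_return[OF m measurable_coordinate_pmat_space]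
    by (auto simp: indicator_def)
qed

lemma worst_cvar_ambiguity_zero:
  assumes "in_poly N a K W h m" and "i < N" and "0 < e" "e \<le> 1"
  shows "worst_cvar N a (ambiguity N a K W h m 0) e i x = - payoff N a m i x"
proof -
  let ?F = "ambiguity N a K W h m 0"
  have "cvar Q e (\<lambda>p. - payoff N a p i x) = - payoff N a m i x" if Q: "Q \<in> ?F" for Q
  proof (rule cvar_AE_const)
    from Q have sets: "sets Q = sets (pmat_space N a)" and "prob_space Q"
      unfolding ambiguity_def by auto
    then show "prob_space Q" by simp
    show "(\<lambda>p. - payoff N a p i x) \<in> borel_measurable Q"
      using measurable_payoff_pmat_space[OF \<open>i < N\<close>]
      by (simp add: measurable_cong_sets[OF sets refl])
    show "AE p in Q. - payoff N a p i x = - payoff N a m i x"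
      using ambiguity_zero_AE_eq_mean[OF Q]
      by (rule AE_mp) (auto intro: payoff_cong[OF _ \<open>i < N\<close>])
  qed (use assms in auto)
  moreover have "?F \<noteq> {}"
    using return_mean_in_ambiguity[OF assms(1)] by blast
  ultimately show ?thesis
    unfolding worst_cvar_def by simp
qed

theorem proposition2:
  fixes N :: nat and a :: "nat \<Rightarrow> nat" and K :: nat
    and W :: "nat \<Rightarrow> nat \<times> (nat \<Rightarrow> nat) \<Rightarrow> real" and h :: "nat \<Rightarrow> real"
    and m :: pmat and eps :: "nat \<Rightarrow> real"
  assumes eps: "\<forall>i<N. 0 < eps i \<and> eps i \<le> 1"
    and bounded: "\<exists>B. \<forall>p\<in>space (pmat_space N a). in_poly N a K W h p \<longrightarrow> (\<forall>d\<in>idx N a. \<bar>p d\<bar> \<le> B)"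
    and m_in: "in_poly N a K W h m"
  shows "DROE N a (ambiguity N a K W h m 0) eps = nash N a m"
proof -
  have "worst_cvar N a (ambiguity N a K W h m 0) (eps i) i y = - payoff N a m i y"
    if "i < N" for i y
    using worst_cvar_ambiguity_zero[OF m_in that] eps that by simp
  then show ?thesis
    unfolding DROE_def nash_def by auto
qed

end
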